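(* Let $N$ be a positive integer and $\mathbf a,\mathbf b,\mathbf c\in\mathbb R^N$ arbitrary column vectors. For nonnegative integers $l,m,n$ with $l+m+n=N$ let $D_{l,m,n}=[\mathbf a\cdots\mathbf a\ \mathbf b\cdots\mathbf b\ \mathbf c\cdots\mathbf c]$ be the $N\times N$ matrix whose first $l$ columns equal $\mathbf a$, next $m$ columns equal $\mathbf b$, and last $n$ columns equal $\mathbf c$. If $l,m,n,l',m',n'$ are nonnegative integers with $l+m+n=l'+m'+n'=N$, $0\le l<l'$ and $0\le m'<m$, then $$\mathrm{UP}[D_{l,m,n}]+\mathrm{UP}[D_{l',m',n'}]\le \mathrm{UP}[D_{l+1,m-1,n}]+\mathrm{UP}[D_{l'-1,m'+1,n'}].$$
   Context: For a real $N\times N$ matrix $A=[a_{ij}]$, the ultradiscrete permanent is $\mathrm{UP}[A]=\max_{\pi}(a_{1\pi_1}+a_{2\pi_2}+\cdots+a_{N\pi_N})$, the maximum over all permutations $\pi$ of $\{1,\dots,N\}$. *)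

theory Defs
  imports Complex_Main "HOL-Combinatorics.Permutations"
begin

text \<open>N x N real matrices and vectors in R^N are represented as functions on nat,
  with indices 0..N-1 (rows i, columns j). Only the values with indices < N matter.\<close>

definition UP :: "nat \<Rightarrow> (nat \<Rightarrow> nat \<Rightarrow> real) \<Rightarrow> real" where
  "UP N A = Max {(\<Sum>i<N. A i (\<pi> i)) | \<pi>. \<pi> permutes {..<N}}"

definition Dmat :: "(nat \<Rightarrow> real) \<Rightarrow> (nat \<Rightarrow> real) \<Rightarrow> (nat \<Rightarrow> real)
    \<Rightarrow> nat \<Rightarrow> nat \<Rightarrow> nat \<Rightarrow> (nat \<Rightarrow> nat \<Rightarrow> real)" where
  "Dmat a b c l m n = (\<lambda>i j. if j < l then a i else if j < l + m then b i else c i)"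

end

theory Submission
  imports Defs
begin

text \<open>Fix optimal permutations \<open>\<pi>\<close> for \<open>D\<^sub>l\<^sub>,\<^sub>m\<^sub>,\<^sub>n\<close> and \<open>\<rho>\<close> for
  \<open>D\<^sub>l\<^sub>'\<^sub>,\<^sub>m\<^sub>'\<^sub>,\<^sub>n\<^sub>'\<close>; the value of a permutation only depends on which of the
  blocks of \<open>a\<close>-, \<open>b\<close>- and \<open>c\<close>-columns each row is sent to. If some row \<open>i\<close> goes to the
  \<open>b\<close>-block under \<open>\<pi>\<close> and to the \<open>a\<close>-block under \<open>\<rho>\<close>, turning one \<open>b\<close>-column of the first
  matrix into an \<open>a\<close>-column and one \<open>a\<close>-column of the second into a \<open>b\<close>-column changes the two
  sums by \<open>a i - b i\<close> and \<open>b i - a i\<close>, so their total is preserved. Otherwise, counting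
  block sizes (\<open>l < l'\<close>, \<open>m' < m\<close>) yields a row \<open>i\<close> sent to the \<open>b\<close>-block by \<open>\<pi>\<close> and to
  the \<open>c\<close>-block by \<open>\<rho>\<close>, and a row \<open>k\<close> sent to the \<open>c\<close>-block by \<open>\<pi>\<close> and to the \<open>a\<close>-block
  by \<open>\<rho>\<close>. Exchanging the images of \<open>i\<close> and \<open>k\<close> in both permutations sends \<open>k\<close> to the
  \<open>b\<close>-block of the first matrix and \<open>i\<close> to the \<open>a\<close>-block of the second; the same two
  column changes then apply, and all the corrections cancel.\<close>

lemma sum_perm_le_UP:
  assumes "\<pi> permutes {..<N}"
  shows "(\<Sum>i<N. A i (\<pi> i)) \<le> UP N A"
  unfolding UP_def
  by (rule Max_ge) (use assms finite_permutations[of "{..<N}"] in auto)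

lemma UP_attained:
  obtains \<pi> where "\<pi> permutes {..<N}" "UP N A = (\<Sum>i<N. A i (\<pi> i))"
proof -
  let ?S = "{(\<Sum>i<N. A i (\<pi> i)) | \<pi>. \<pi> permutes {..<N}}"
  have "finite ?S"
    using finite_permutations[of "{..<N}"] by simp
  moreover have "?S \<noteq> {}"
    using permutes_id by blast
  ultimately have "UP N A \<in> ?S"
    unfolding UP_def by (rule Max_in)
  then show ?thesis
    using that by blast
qed

lemma sum_eq_sum_plus_diff_on:
  fixes f g :: "'a \<Rightarrow> 'b :: ab_group_add"
  assumes "finite S" "T \<subseteq> S" "\<And>r. r \<in> S - T \<Longrightarrow> f r = g r"
  shows "sum f S = sum g S + (\<Sum>r\<in>T. f r - g r)"
proof -
  have "sum f S - sum g S = (\<Sum>r\<in>S. f r - g r)"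
    by (simp add: sum_subtractf)
  also have "\<dots> = (\<Sum>r\<in>T. f r - g r)"
    by (rule sum.mono_neutral_right) (use assms in auto)
  finally show ?thesis
    by (simp add: algebra_simps)
qed

lemma card_permutes_preimage:
  assumes "\<pi> permutes {..<N}" "J \<subseteq> {..<N}"
  shows "card {i. i < N \<and> \<pi> i \<in> J} = card J"
proof -
  have "{i. i < N \<and> \<pi> i \<in> J} = \<pi> -` J"
    using assms permutes_not_in[OF assms(1)] by fastforce
  then show ?thesis
    using card_vimage_inj[OF permutes_inj[OF assms(1)]] permutes_surj[OF assms(1)] by simp
qed

lemma sum_perm_swap_rows:
  fixes M :: "nat \<Rightarrow> nat \<Rightarrow> 'b :: ab_group_add"
  assumes "i < N" "k < N" "i \<noteq> k"
  shows "(\<Sum>r<N. M r ((\<pi> \<circ> transpose i k) r)) = (\<Sum>r<N. M r (\<pi> r))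
           + (M i (\<pi> k) - M i (\<pi> i)) + (M k (\<pi> i) - M k (\<pi> k))"
proof -
  have "(\<Sum>r<N. M r ((\<pi> \<circ> transpose i k) r)) = (\<Sum>r<N. M r (\<pi> r))
          + (\<Sum>r\<in>{i, k}. M r ((\<pi> \<circ> transpose i k) r) - M r (\<pi> r))"
    by (rule sum_eq_sum_plus_diff_on) (use assms in auto)
  then show ?thesis
    using assms by (simp add: algebra_simps)
qed

text \<open>If row \<open>i\<close> is matched to a column equal to column \<open>t\<close>, it may be rematched to \<open>t\<close>
  itself; afterwards only the entry \<open>(i, t)\<close> sees a change of column \<open>t\<close>.\<close>

lemma UP_ge_change_column:
  fixes M M' :: "nat \<Rightarrow> nat \<Rightarrow> real"
  assumes \<pi>: "\<pi> permutes {..<N}" and "i < N" "t < N"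
    and M': "\<And>r j. j \<noteq> t \<Longrightarrow> M' r j = M r j"
    and same_column: "\<And>r. M r (\<pi> i) = M r t"
  shows "(\<Sum>r<N. M r (\<pi> r)) + (M' i t - M i t) \<le> UP N M'"
proof -
  let ?\<sigma> = "transpose (\<pi> i) t \<circ> \<pi>"
  have \<sigma>: "?\<sigma> permutes {..<N}"
    using assms permutes_in_image[OF \<pi>]
    by (intro permutes_compose[OF \<pi> permutes_swap_id]) auto
  have \<sigma>_ne_t: "?\<sigma> r \<noteq> t" if "r \<noteq> i" for r
    using that permutes_inj[OF \<sigma>] by (metis comp_apply injD transpose_apply_first)
  have "(\<Sum>r<N. M' r (?\<sigma> r)) = (\<Sum>r<N. M r (?\<sigma> r)) + (\<Sum>r\<in>{i}. M' r (?\<sigma> r) - M r (?\<sigma> r))"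
    by (rule sum_eq_sum_plus_diff_on) (use assms \<sigma>_ne_t in auto)
  also have "(\<Sum>r<N. M r (?\<sigma> r)) = (\<Sum>r<N. M r (\<pi> r))"
    using same_column by (intro sum.cong) (auto simp: transpose_def)
  finally show ?thesis
    using sum_perm_le_UP[OF \<sigma>, of M'] by simp
qed

lemma UP_Dmat_ge_b_to_a:
  assumes \<pi>: "\<pi> permutes {..<N}" and "i < N" "l \<le> \<pi> i" "\<pi> i < l + m" "l + m \<le> N"
  shows "(\<Sum>r<N. Dmat a b c l m n r (\<pi> r)) + (a i - b i)
           \<le> UP N (Dmat a b c (l + 1) (m - 1) n)"
proof -
  have "(\<Sum>r<N. Dmat a b c l m n r (\<pi> r))
      + (Dmat a b c (l + 1) (m - 1) n i l - Dmat a b c l m n i l)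
      \<le> UP N (Dmat a b c (l + 1) (m - 1) n)"
    by (rule UP_ge_change_column[OF \<pi>]) (use assms in \<open>auto simp: Dmat_def\<close>)
  then show ?thesis
    using assms by (simp add: Dmat_def)
qed

lemma UP_Dmat_ge_a_to_b:
  assumes \<rho>: "\<rho> permutes {..<N}" and "i < N" "\<rho> i < l" "l \<le> N"
  shows "(\<Sum>r<N. Dmat a b c l m n r (\<rho> r)) + (b i - a i)
           \<le> UP N (Dmat a b c (l - 1) (m + 1) n)"
proof -
  have "(\<Sum>r<N. Dmat a b c l m n r (\<rho> r))
      + (Dmat a b c (l - 1) (m + 1) n i (l - 1) - Dmat a b c l m n i (l - 1))
      \<le> UP N (Dmat a b c (l - 1) (m + 1) n)"
    by (rule UP_ge_change_column[OF \<rho>]) (use assms in \<open>auto simp: Dmat_def\<close>)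
  moreover have "Dmat a b c (l - 1) (m + 1) n i (l - 1) = b i" "Dmat a b c l m n i (l - 1) = a i"
    using assms by (auto simp: Dmat_def)
  ultimately show ?thesis
    by simp
qed

lemma block_rows_cases:
  fixes N l m l' m' :: nat
  assumes \<pi>: "\<pi> permutes {..<N}" and \<rho>: "\<rho> permutes {..<N}"
    and "l + m \<le> N" "l' + m' \<le> N" "l < l'" "m' < m"
  obtains (direct) i where "i < N" "l \<le> \<pi> i" "\<pi> i < l + m" "\<rho> i < l'"
  | (exchange) i k where "i < N" "l \<le> \<pi> i" "\<pi> i < l + m" "l' + m' \<le> \<rho> i"
      "k < N" "l + m \<le> \<pi> k" "\<rho> k < l'"
proof (cases "\<exists>i. i < N \<and> l \<le> \<pi> i \<and> \<pi> i < l + m \<and> \<rho> i < l'")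
  case True
  with that(1) show ?thesis
    by blast
next
  case False
  let ?A = "{i. i < N \<and> \<pi> i \<in> {..<l}}" and ?A' = "{i. i < N \<and> \<rho> i \<in> {..<l'}}"
  let ?B = "{i. i < N \<and> \<pi> i \<in> {l..<l + m}}" and ?B' = "{i. i < N \<and> \<rho> i \<in> {l'..<l' + m'}}"
  have "{l..<l + m} \<subseteq> {..<N}" "{l'..<l' + m'} \<subseteq> {..<N}"
    using assms by auto
  then have "card ?A = l" "card ?A' = l'" "card ?B = m" "card ?B' = m'"
    using card_permutes_preimage[OF \<pi>, of "{..<l}"] card_permutes_preimage[OF \<rho>, of "{..<l'}"]
      card_permutes_preimage[OF \<pi>, of "{l..<l + m}"] card_permutes_preimage[OF \<rho>, of "{l'..<l' + m'}"]
      assms by auto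
  then have "\<not> ?A' \<subseteq> ?A" "\<not> ?B \<subseteq> ?B'"
    using card_mono[of ?A ?A'] card_mono[of ?B' ?B] assms by auto
  then obtain i k where "i \<in> ?B - ?B'" "k \<in> ?A' - ?A"
    by blast
  with False show ?thesis
    using that(2) by (auto simp: not_less)
qed

lemma sum_Dmat_pair_le_UP:
  assumes \<pi>: "\<pi> permutes {..<N}" and \<rho>: "\<rho> permutes {..<N}"
    and "l + m \<le> N" "l' + m' \<le> N" "l < l'" "m' < m"
  shows "(\<Sum>r<N. Dmat a b c l m n r (\<pi> r)) + (\<Sum>r<N. Dmat a b c l' m' n' r (\<rho> r))
      \<le> UP N (Dmat a b c (l + 1) (m - 1) n) + UP N (Dmat a b c (l' - 1) (m' + 1) n')"
  using \<pi> \<rho> assms(3-)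
proof (cases rule: block_rows_cases)
  case (direct i)
  then show ?thesis
    using UP_Dmat_ge_b_to_a[OF \<pi>, of i l m a b c n] UP_Dmat_ge_a_to_b[OF \<rho>, of i l' a b c m' n']
      assms by linarith
next
  case (exchange i k)
  then have "i \<noteq> k" by auto
  have \<pi>': "\<pi> \<circ> transpose i k permutes {..<N}" and \<rho>': "\<rho> \<circ> transpose i k permutes {..<N}"
    using exchange by (auto intro: permutes_compose[OF permutes_swap_id] \<pi> \<rho>)
  have "(\<Sum>r<N. Dmat a b c l m n r ((\<pi> \<circ> transpose i k) r))
      = (\<Sum>r<N. Dmat a b c l m n r (\<pi> r)) + (c i - b i) + (b k - c k)"
    using sum_perm_swap_rows[OF exchange(1,5) \<open>i \<noteq> k\<close>, of "Dmat a b c l m n" \<pi>] exchange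
    by (simp add: Dmat_def)
  moreover have "(\<Sum>r<N. Dmat a b c l' m' n' r ((\<rho> \<circ> transpose i k) r))
      = (\<Sum>r<N. Dmat a b c l' m' n' r (\<rho> r)) + (a i - c i) + (c k - a k)"
    using sum_perm_swap_rows[OF exchange(1,5) \<open>i \<noteq> k\<close>, of "Dmat a b c l' m' n'" \<rho>] exchange
    by (simp add: Dmat_def)
  ultimately show ?thesis
    using UP_Dmat_ge_b_to_a[OF \<pi>', of k l m a b c n] UP_Dmat_ge_a_to_b[OF \<rho>', of i l' a b c m' n']
      exchange assms by simp
qed

theorem proposition2:
  fixes N l m n l' m' n' :: nat and a b c :: "nat \<Rightarrow> real"
  assumes "N > 0"
    and "l + m + n = N" and "l' + m' + n' = N"
    and "l < l'" and "m' < m"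
  shows "UP N (Dmat a b c l m n) + UP N (Dmat a b c l' m' n')
     \<le> UP N (Dmat a b c (l + 1) (m - 1) n) + UP N (Dmat a b c (l' - 1) (m' + 1) n')"
proof -
  obtain \<pi> where "\<pi> permutes {..<N}" "UP N (Dmat a b c l m n) = (\<Sum>r<N. Dmat a b c l m n r (\<pi> r))"
    using UP_attained .
  moreover obtain \<rho> where "\<rho> permutes {..<N}"
    "UP N (Dmat a b c l' m' n') = (\<Sum>r<N. Dmat a b c l' m' n' r (\<rho> r))"
    using UP_attained .
  ultimately show ?thesis
    using sum_Dmat_pair_le_UP[of \<pi> N \<rho> l m l' m' a b c n n'] assms by simp
qed

end
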